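(* Suppose that $\mathcal{H}$ is a group of automorphisms of a totally disconnected, locally compact group $G$ that is virtually flat. Then $\mathcal{H}_{FC_d}$ is a normal subgroup of $\mathcal{H}$ that contains every flat subgroup of $\mathcal{H}$ of finite index. In particular, $\mathcal{H}_{FC_d}$ has finite index in $\mathcal{H}$.
   Context: Automorphisms are continuous with continuous inverse. $\mathcal{B}(G)$ is the set of compact, open subgroups of $G$ with metric $d(V,W)=\log\bigl(|V:V\cap W|\cdot|W:W\cap V|\bigr)$. A set $B$ of automorphisms is bounded if $B.V=\{\beta(V):\beta\in B\}$ has bounded diameter for some (equivalently every) $V\in\mathcal{B}(G)$. $\mathcal{H}_{FC_d}=\{\varphi\in\mathcal{H}:\{\psi\varphi\psi^{-1}:\psi\in\mathcal{H}\}\text{ is bounded}\}$. The scale of $\varphi$ is $s_G(\varphi)=\min\{|\varphi(V):\varphi(V)\cap V|:V\in\mathcal{B}(G)\}$; a group $\mathcal{K}$ of automorphisms is flat if there is $O\in\mathcal{B}(G)$ with $|\varphi(O):\varphi(O)\cap O|=s_G(\varphi)$ for all $\varphi\in\mathcal{K}$; $\mathcal{H}$ is virtually flat if it has a flat subgroup of finite index. *)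

theory Defs
  imports "HOL-Analysis.Analysis" "HOL-Algebra.Algebra"
begin

definition tdlc_group :: "('a, 'b) monoid_scheme \<Rightarrow> 'a topology \<Rightarrow> bool" where
  "tdlc_group G T \<longleftrightarrow> group G \<and> topspace T = carrier G
     \<and> continuous_map (prod_topology T T) T (\<lambda>(x, y). x \<otimes>\<^bsub>G\<^esub> y)
     \<and> continuous_map T T (\<lambda>x. inv\<^bsub>G\<^esub> x)
     \<and> locally_compact_space T
     \<and> (\<forall>x \<in> topspace T. Collect (connected_component_of T x) = {x})"

text \<open>Topological automorphisms (continuous with continuous inverse), as elements of
  the group of bijections of the carrier (extensional functions, composition).\<close>
definition top_aut :: "('a, 'b) monoid_scheme \<Rightarrow> 'a topology \<Rightarrow> ('a \<Rightarrow> 'a) set" where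
  "top_aut G T = {\<phi> \<in> auto G. homeomorphic_map T T \<phi>}"

definition aut_grp :: "('a, 'b) monoid_scheme \<Rightarrow> ('a \<Rightarrow> 'a) set \<Rightarrow> ('a \<Rightarrow> 'a) monoid" where
  "aut_grp G H = (BijGroup (carrier G)) \<lparr>carrier := H\<rparr>"

definition COS :: "('a, 'b) monoid_scheme \<Rightarrow> 'a topology \<Rightarrow> 'a set set" where
  "COS G T = {V. subgroup V G \<and> compactin T V \<and> openin T V}"

definition idx :: "('a, 'b) monoid_scheme \<Rightarrow> 'a set \<Rightarrow> 'a set \<Rightarrow> nat" where
  "idx G V W = card {W #>\<^bsub>G\<^esub> a | a. a \<in> V}"

definition cos_dist :: "('a, 'b) monoid_scheme \<Rightarrow> 'a set \<Rightarrow> 'a set \<Rightarrow> real" where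
  "cos_dist G V W = ln (real (idx G V (V \<inter> W) * idx G W (W \<inter> V)))"

definition bounded_auts :: "('a, 'b) monoid_scheme \<Rightarrow> 'a topology \<Rightarrow> ('a \<Rightarrow> 'a) set \<Rightarrow> bool" where
  "bounded_auts G T B \<longleftrightarrow> (\<exists>V \<in> COS G T. \<exists>M::real.
      \<forall>\<beta> \<in> B. \<forall>\<gamma> \<in> B. cos_dist G (\<beta> ` V) (\<gamma> ` V) \<le> M)"

definition FCd :: "('a, 'b) monoid_scheme \<Rightarrow> 'a topology \<Rightarrow> ('a \<Rightarrow> 'a) set \<Rightarrow> ('a \<Rightarrow> 'a) set" where
  "FCd G T H = {\<phi> \<in> H. bounded_auts G T
      {\<psi> \<otimes>\<^bsub>aut_grp G H\<^esub> \<phi> \<otimes>\<^bsub>aut_grp G H\<^esub> inv\<^bsub>aut_grp G H\<^esub> \<psi> | \<psi>. \<psi> \<in> H}}"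

definition scale :: "('a, 'b) monoid_scheme \<Rightarrow> 'a topology \<Rightarrow> ('a \<Rightarrow> 'a) \<Rightarrow> nat" where
  "scale G T \<phi> = (LEAST n. \<exists>V \<in> COS G T. n = idx G (\<phi> ` V) (\<phi> ` V \<inter> V))"

definition flat :: "('a, 'b) monoid_scheme \<Rightarrow> 'a topology \<Rightarrow> ('a \<Rightarrow> 'a) set \<Rightarrow> bool" where
  "flat G T K \<longleftrightarrow> (\<exists>U \<in> COS G T. \<forall>\<phi> \<in> K. idx G (\<phi> ` U) (\<phi> ` U \<inter> U) = scale G T \<phi>)"

definition finite_index :: "('c, 'd) monoid_scheme \<Rightarrow> 'c set \<Rightarrow> bool" where
  "finite_index H K \<longleftrightarrow> finite (rcosets\<^bsub>H\<^esub> K)"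

definition virtually_flat :: "('a, 'b) monoid_scheme \<Rightarrow> 'a topology \<Rightarrow> ('a \<Rightarrow> 'a) set \<Rightarrow> bool" where
  "virtually_flat G T H \<longleftrightarrow> (\<exists>K. subgroup K (aut_grp G H) \<and> flat G T K
      \<and> finite_index (aut_grp G H) K)"

end

theory Submission
  imports Defs
begin

text \<open>On compact open subgroups, \<open>m(V, W) = |V : V \<inter> W| |W : W \<inter> V|\<close> is submultiplicative
  along triangles and invariant under automorphisms, so a set \<open>B\<close> of automorphisms is bounded
  iff \<open>m(\<beta>(U), U)\<close> is bounded over \<open>\<beta> \<in> B\<close> for one fixed \<open>U\<close>. Then
  \<open>m(\<psi>\<phi>\<theta>\<psi>\<inverse>(U), U) \<le> m(\<psi>\<theta>\<psi>\<inverse>(U), U) m(\<psi>\<phi>\<psi>\<inverse>(U), U)\<close> and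
  \<open>m(\<psi>\<phi>\<inverse>\<psi>\<inverse>(U), U) = m(\<psi>\<phi>\<psi>\<inverse>(U), U)\<close> make \<open>\<H>\<^sub>F\<^sub>C\<^sub>d\<close> a normal subgroup.
  If \<open>K\<close> is flat with \<open>U\<close> minimizing for all of \<open>K\<close>, then \<open>m(\<kappa>\<phi>\<kappa>\<inverse>(U), U) = s(\<phi>) s(\<phi>\<inverse>)\<close>
  for all \<open>\<phi>, \<kappa> \<in> K\<close>, because the scale is a conjugacy invariant. If moreover \<open>K\<close> has finite
  index, every conjugate \<open>\<psi>\<phi>\<psi>\<inverse>\<close> is a conjugate within \<open>K\<close> followed by conjugation by one of
  finitely many coset representatives, so the conjugacy class of \<open>\<phi>\<close> is bounded. Hence
  \<open>K \<subseteq> \<H>\<^sub>F\<^sub>C\<^sub>d\<close>, and \<open>\<H>\<^sub>F\<^sub>C\<^sub>d\<close> inherits finite index from \<open>K\<close>.\<close>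

definition rcosets_in :: "('a, 'b) monoid_scheme \<Rightarrow> 'a set \<Rightarrow> 'a set \<Rightarrow> 'a set set" where
  "rcosets_in G V W = {W #>\<^bsub>G\<^esub> a | a. a \<in> V}"

lemma idx_eq_card_rcosets_in: "idx G V W = card (rcosets_in G V W)"
  by (simp add: idx_def rcosets_in_def)

lemma (in subgroup) rcosets_in_nonempty: "rcosets_in G H W \<noteq> {}"
  using one_closed unfolding rcosets_in_def by blast

text \<open>Having fixed a representative \<open>r\<close> of \<open>(V \<inter> W) a\<close>, the coset \<open>(V \<inter> Q) a\<close> is determined by
  \<open>(V \<inter> W) a\<close> and the coset of \<open>W \<inter> Q\<close> through \<open>a r\<inverse> \<in> V \<inter> W\<close>.\<close>
lemma (in group) card_rcosets_in_Int_le: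
  assumes V: "subgroup V G" and W: "subgroup W G" and Q: "subgroup Q G"
    and fin: "finite (rcosets_in G W (W \<inter> Q))" "finite (rcosets_in G V (V \<inter> W))"
  shows "card (rcosets_in G V (V \<inter> Q))
           \<le> card (rcosets_in G W (W \<inter> Q)) * card (rcosets_in G V (V \<inter> W))"
proof -
  have VQ: "subgroup (V \<inter> Q) G" and VW: "subgroup (V \<inter> W) G" and WQ: "subgroup (W \<inter> Q) G"
    using V W Q by (simp_all add: subgroups_Inter_pair)
  define rep where "rep S = (SOME x. x \<in> S)" for S :: "'a set"
  have rep: "x \<in> S \<Longrightarrow> rep S \<in> S" for x S
    unfolding rep_def by (rule someI)
  define g where "g = (\<lambda>(Z, Y). (V \<inter> Q) #> (rep (V \<inter> Z) \<otimes> rep Y))"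
  have "rcosets_in G V (V \<inter> Q) \<subseteq> g ` (rcosets_in G W (W \<inter> Q) \<times> rcosets_in G V (V \<inter> W))"
  proof
    fix C assume "C \<in> rcosets_in G V (V \<inter> Q)"
    then obtain a where a: "a \<in> V" and C: "C = (V \<inter> Q) #> a"
      by (auto simp: rcosets_in_def)
    have a_carr: "a \<in> carrier G" using a subgroup.subset[OF V] by blast
    let ?Y = "(V \<inter> W) #> a"
    have "rep ?Y \<in> ?Y" using rep rcos_self[OF a_carr VW] .
    then obtain x where x: "x \<in> V \<inter> W" and rep_Y: "rep ?Y = x \<otimes> a"
      by (auto simp: r_coset_def)
    have x_carr: "x \<in> carrier G" using x subgroup.subset[OF V] by blast
    let ?Z = "(W \<inter> Q) #> inv x"
    have "inv x \<in> V \<inter> ?Z"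
      using x rcos_self[OF inv_closed[OF x_carr] WQ] subgroup.m_inv_closed[OF V] by blast
    then have "rep (V \<inter> ?Z) \<in> V \<inter> ?Z" by (rule rep)
    then obtain y where y: "y \<in> W \<inter> Q" and rep_Z: "rep (V \<inter> ?Z) = y \<otimes> inv x"
      and rep_Z_V: "y \<otimes> inv x \<in> V"
      by (auto simp: r_coset_def)
    have y_carr: "y \<in> carrier G" using y subgroup.subset[OF W] by blast
    have "y = (y \<otimes> inv x) \<otimes> x" using x_carr y_carr by (simp add: m_assoc)
    then have "y \<in> V \<inter> Q" using rep_Z_V x y subgroup.m_closed[OF V] by (metis IntD1 IntD2 IntI)
    have "inv x \<otimes> (x \<otimes> a) = a" using x_carr a_carr by (simp add: m_assoc[symmetric])
    then have "g (?Z, ?Y) = (V \<inter> Q) #> (y \<otimes> a)"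
      using x_carr y_carr a_carr by (simp add: g_def rep_Z rep_Y m_assoc)
    also have "\<dots> = C"
      using \<open>y \<in> V \<inter> Q\<close> y_carr a_carr subgroup.subset[OF VQ] VQ
      by (simp add: C coset_mult_assoc[symmetric] coset_join2)
    finally have "C = g (?Z, ?Y)" ..
    moreover have "?Z \<in> rcosets_in G W (W \<inter> Q)" and "?Y \<in> rcosets_in G V (V \<inter> W)"
      using x a subgroup.m_inv_closed[OF W] by (auto simp: rcosets_in_def)
    ultimately show "C \<in> g ` (rcosets_in G W (W \<inter> Q) \<times> rcosets_in G V (V \<inter> W))"
      by blast
  qed
  then have "card (rcosets_in G V (V \<inter> Q))
               \<le> card (g ` (rcosets_in G W (W \<inter> Q) \<times> rcosets_in G V (V \<inter> W)))"
    using fin by (intro card_mono) auto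
  also have "\<dots> \<le> card (rcosets_in G W (W \<inter> Q) \<times> rcosets_in G V (V \<inter> W))"
    using fin by (intro card_image_le) auto
  finally show ?thesis by (simp add: card_cartesian_product)
qed

lemma (in group) finite_rcosets_mono:
  assumes K: "subgroup K G" and F: "subgroup F G" and "K \<subseteq> F"
    and fin: "finite (rcosets K)"
  shows "finite (rcosets F)"
proof -
  have FK: "F <#> K = F"
  proof
    show "F <#> K \<subseteq> F"
      using F K \<open>K \<subseteq> F\<close> by (auto simp: set_mult_def intro: subgroup.m_closed)
    show "F \<subseteq> F <#> K"
    proof
      fix x assume "x \<in> F"
      then have "x = x \<otimes> \<one>" using subgroup.subset[OF F] by auto
      then show "x \<in> F <#> K"
        using \<open>x \<in> F\<close> subgroup.one_closed[OF K] unfolding set_mult_def by blast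
    qed
  qed
  have "rcosets F \<subseteq> (\<lambda>C. F <#> C) ` (rcosets K)"
  proof
    fix D assume "D \<in> rcosets F"
    then obtain h where h: "h \<in> carrier G" and D: "D = F #> h"
      by (auto simp: RCOSETS_def)
    have "F <#> (K #> h) = D"
      using setmult_rcos_assoc[OF subgroup.subset[OF F] subgroup.subset[OF K] h] FK D by simp
    moreover have "K #> h \<in> rcosets K" using h by (auto simp: RCOSETS_def)
    ultimately show "D \<in> (\<lambda>C. F <#> C) ` (rcosets K)" by blast
  qed
  then show ?thesis using fin finite_subset by blast
qed

locale topological_group = group G for G :: "('a, 'b) monoid_scheme" (structure) +
  fixes T :: "'a topology"
  assumes topspace_eq: "topspace T = carrier G"
    and continuous_mult: "continuous_map (prod_topology T T) T (\<lambda>(x, y). x \<otimes> y)"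
begin

lemma continuous_map_right_mult:
  assumes "a \<in> carrier G"
  shows "continuous_map T T (\<lambda>x. x \<otimes> a)"
proof -
  have "continuous_map T (prod_topology T T) (\<lambda>x. (x, a))"
    using assms by (intro continuous_map_pairedI) (auto simp: topspace_eq)
  from continuous_map_compose[OF this continuous_mult] show ?thesis
    by (simp add: o_def)
qed

lemma openin_rcos:
  assumes D: "openin T D" and a: "a \<in> carrier G"
  shows "openin T (D #> a)"
proof -
  have D_carr: "D \<subseteq> carrier G" using openin_subset[OF D] by (simp add: topspace_eq)
  have "D #> a = {x \<in> topspace T. x \<otimes> inv a \<in> D}"
  proof safe
    fix x assume "x \<in> D #> a"
    then obtain d where "d \<in> D" "x = d \<otimes> a" by (auto simp: r_coset_def)
    with D_carr a show "x \<in> topspace T" and "x \<otimes> inv a \<in> D"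
      by (auto simp: topspace_eq m_assoc)
  next
    fix x assume "x \<in> topspace T" "x \<otimes> inv a \<in> D"
    moreover have "x = (x \<otimes> inv a) \<otimes> a" using \<open>x \<in> topspace T\<close> a
      by (simp add: topspace_eq m_assoc)
    ultimately show "x \<in> D #> a" unfolding r_coset_def by blast
  qed
  then show ?thesis
    using openin_continuous_map_preimage[OF continuous_map_right_mult[OF inv_closed[OF a]] D]
    by simp
qed

text \<open>The cosets of \<open>D\<close> form an open cover of the compact set \<open>V\<close> by pairwise disjoint sets.\<close>
lemma finite_rcosets_in_open_subgroup:
  assumes V: "subgroup V G" "compactin T V" and D: "subgroup D G" "openin T D"
  shows "finite (rcosets_in G V D)"
proof -
  have V_carr: "V \<subseteq> carrier G" using subgroup.subset[OF V(1)] .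
  have "V \<subseteq> \<Union>(rcosets_in G V D)"
    using rcos_self[OF _ D(1)] V_carr by (auto simp: rcosets_in_def)
  moreover have "\<forall>C \<in> rcosets_in G V D. openin T C"
    using openin_rcos[OF D(2)] V_carr by (auto simp: rcosets_in_def)
  ultimately obtain F where F: "finite F" "F \<subseteq> rcosets_in G V D" "V \<subseteq> \<Union>F"
    using V(2) unfolding compactin_def by metis
  have "rcosets_in G V D \<subseteq> F"
  proof
    fix C assume "C \<in> rcosets_in G V D"
    then obtain a where a: "a \<in> V" and C: "C = D #> a" by (auto simp: rcosets_in_def)
    then obtain E where "E \<in> F" "a \<in> E" using F by blast
    moreover obtain b where "b \<in> V" "E = D #> b"
      using \<open>E \<in> F\<close> F by (auto simp: rcosets_in_def)
    moreover have "D #> b = D #> a"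
      using repr_independence[OF _ _ D(1)] \<open>a \<in> E\<close> \<open>E = D #> b\<close> \<open>b \<in> V\<close> V_carr by blast
    ultimately show "C \<in> F" using C by simp
  qed
  then show ?thesis using F finite_subset by blast
qed

lemma COS_subgroup: "V \<in> COS G T \<Longrightarrow> subgroup V G"
  by (simp add: COS_def)

lemma COS_subset_carrier: "V \<in> COS G T \<Longrightarrow> V \<subseteq> carrier G"
  by (simp add: COS_def subgroup.subset)

lemma finite_rcosets_in_COS:
  assumes "V \<in> COS G T" "W \<in> COS G T"
  shows "finite (rcosets_in G V (V \<inter> W))"
  using assms by (intro finite_rcosets_in_open_subgroup) (auto simp: COS_def subgroups_Inter_pair)

lemma idx_COS_ge_1:
  assumes "V \<in> COS G T" "W \<in> COS G T"
  shows "idx G V (V \<inter> W) \<ge> 1"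
  using finite_rcosets_in_COS[OF assms] subgroup.rcosets_in_nonempty[OF COS_subgroup[OF assms(1)]]
  by (simp add: idx_eq_card_rcosets_in Suc_le_eq card_gt_0_iff)

lemma idx_COS_triangle:
  assumes "V \<in> COS G T" "W \<in> COS G T" "Q \<in> COS G T"
  shows "idx G V (V \<inter> Q) \<le> idx G W (W \<inter> Q) * idx G V (V \<inter> W)"
  using card_rcosets_in_Int_le[OF COS_subgroup COS_subgroup COS_subgroup
      finite_rcosets_in_COS finite_rcosets_in_COS] assms
  by (simp add: idx_eq_card_rcosets_in)

end


text \<open>\<open>cos_mdist G V W\<close> is the exponential of the metric \<open>cos_dist G V W\<close> on compact open subgroups;
  natural numbers make the estimates below multiplicative and cast-free.\<close>
definition cos_mdist :: "('a, 'b) monoid_scheme \<Rightarrow> 'a set \<Rightarrow> 'a set \<Rightarrow> nat" where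
  "cos_mdist G V W = idx G V (V \<inter> W) * idx G W (W \<inter> V)"

lemma cos_dist_eq_ln_cos_mdist: "cos_dist G V W = ln (real (cos_mdist G V W))"
  by (simp add: cos_dist_def cos_mdist_def)

context topological_group
begin

lemma cos_mdist_commute: "cos_mdist G V W = cos_mdist G W V"
  by (simp add: cos_mdist_def)

lemma cos_mdist_ge_1: "V \<in> COS G T \<Longrightarrow> W \<in> COS G T \<Longrightarrow> cos_mdist G V W \<ge> 1"
  using idx_COS_ge_1 by (simp add: cos_mdist_def)

lemma cos_mdist_triangle:
  assumes "V \<in> COS G T" "W \<in> COS G T" "Q \<in> COS G T"
  shows "cos_mdist G V Q \<le> cos_mdist G V W * cos_mdist G W Q"
proof -
  have "idx G V (V \<inter> Q) * idx G Q (Q \<inter> V)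
          \<le> (idx G W (W \<inter> Q) * idx G V (V \<inter> W)) * (idx G W (W \<inter> V) * idx G Q (Q \<inter> W))"
    using assms by (intro mult_le_mono idx_COS_triangle)
  then show ?thesis by (simp add: cos_mdist_def algebra_simps)
qed

lemma cos_dist_le_imp_cos_mdist_le:
  assumes "V \<in> COS G T" "W \<in> COS G T" "cos_dist G V W \<le> M"
  shows "cos_mdist G V W \<le> nat \<lceil>exp M\<rceil>"
proof -
  have "real (cos_mdist G V W) > 0" using cos_mdist_ge_1[OF assms(1,2)] by simp
  then have "real (cos_mdist G V W) = exp (cos_dist G V W)"
    by (simp add: cos_dist_eq_ln_cos_mdist)
  then have "real (cos_mdist G V W) \<le> exp M"
    using assms(3) by simp
  then show ?thesis by linarith
qed

lemma cos_mdist_le_imp_cos_dist_le: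
  assumes "V \<in> COS G T" "W \<in> COS G T" "cos_mdist G V W \<le> R"
  shows "cos_dist G V W \<le> ln (real R)"
  using cos_mdist_ge_1[OF assms(1,2)] assms(3) by (simp add: cos_dist_eq_ln_cos_mdist)

end

locale aut_subgroup = topological_group +
  fixes H :: "('a \<Rightarrow> 'a) set"
  assumes H_top_aut: "H \<subseteq> top_aut G T"
    and H_subgroup: "subgroup H (BijGroup (carrier G))"
begin

abbreviation \<H> where "\<H> \<equiv> aut_grp G H"

lemma carrier_\<H>: "carrier \<H> = H"
  by (simp add: aut_grp_def)

sublocale \<H>: group \<H>
  unfolding aut_grp_def by (rule subgroup.subgroup_is_group[OF H_subgroup group_BijGroup])

lemma \<H>_inv_closed: "x \<in> H \<Longrightarrow> inv\<^bsub>\<H>\<^esub> x \<in> H"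
  using \<H>.inv_closed by (simp add: carrier_\<H>)

lemma \<H>_mult_closed: "x \<in> H \<Longrightarrow> y \<in> H \<Longrightarrow> x \<otimes>\<^bsub>\<H>\<^esub> y \<in> H"
  using \<H>.m_closed by (simp add: carrier_\<H>)

lemma aut_Bij: "x \<in> H \<Longrightarrow> x \<in> Bij (carrier G)"
  using subgroup.subset[OF H_subgroup] by (auto simp: BijGroup_def)

lemma aut_hom: "x \<in> H \<Longrightarrow> x \<in> hom G G"
  using H_top_aut by (auto simp: top_aut_def auto_def)

lemma aut_homeomorphic_map: "x \<in> H \<Longrightarrow> homeomorphic_map T T x"
  using H_top_aut by (auto simp: top_aut_def)

lemma aut_inj_on: "x \<in> H \<Longrightarrow> inj_on x (carrier G)"
  using aut_Bij by (auto simp: Bij_def bij_betw_def)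

lemma aut_image_subset: "x \<in> H \<Longrightarrow> V \<subseteq> carrier G \<Longrightarrow> x ` V \<subseteq> carrier G"
  using aut_Bij Bij_imp_funcset by fastforce

lemma image_\<H>_mult:
  assumes "x \<in> H" "y \<in> H" "V \<subseteq> carrier G"
  shows "(x \<otimes>\<^bsub>\<H>\<^esub> y) ` V = x ` y ` V"
  using assms aut_Bij by (auto simp: aut_grp_def BijGroup_def compose_def)

lemma image_\<H>_one: "V \<subseteq> carrier G \<Longrightarrow> \<one>\<^bsub>\<H>\<^esub> ` V = V"
  by (auto simp: aut_grp_def BijGroup_def)

lemma image_\<H>_inv_image:
  assumes "x \<in> H" "V \<subseteq> carrier G"
  shows "(inv\<^bsub>\<H>\<^esub> x) ` x ` V = V"
  using image_\<H>_mult[OF \<H>_inv_closed[OF assms(1)] assms] image_\<H>_one assms by (simp add: carrier_\<H>)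

lemma image_image_\<H>_inv:
  assumes "x \<in> H" "V \<subseteq> carrier G"
  shows "x ` (inv\<^bsub>\<H>\<^esub> x) ` V = V"
  using image_\<H>_mult[OF assms(1) \<H>_inv_closed[OF assms(1)] assms(2)] image_\<H>_one assms by (simp add: carrier_\<H>)

lemma COS_image:
  assumes x: "x \<in> H" and V: "V \<in> COS G T"
  shows "x ` V \<in> COS G T"
proof -
  interpret group_hom G G x
    using aut_hom[OF x] by (simp add: group_hom_def group_hom_axioms_def is_group)
  have "V \<subseteq> topspace T" using COS_subset_carrier[OF V] by (simp add: topspace_eq)
  then have "openin T (x ` V) \<and> compactin T (x ` V)"
    using V homeomorphic_map_openness[OF aut_homeomorphic_map[OF x]]
      homeomorphic_map_compactness[OF aut_homeomorphic_map[OF x]]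
    by (simp add: COS_def)
  then show ?thesis
    using subgroup_img_is_subgroup COS_subgroup[OF V] by (simp add: COS_def)
qed

lemma image_rcos:
  "x \<in> H \<Longrightarrow> D \<subseteq> carrier G \<Longrightarrow> a \<in> carrier G \<Longrightarrow> x ` (D #> a) = x ` D #> x a"
  using aut_hom by (force simp: r_coset_def hom_mult)

lemma image_Int:
  "x \<in> H \<Longrightarrow> V \<subseteq> carrier G \<Longrightarrow> W \<subseteq> carrier G \<Longrightarrow> x ` V \<inter> x ` W = x ` (V \<inter> W)"
  using aut_inj_on by (auto simp: inj_on_def) blast

lemma rcosets_in_image:
  assumes x: "x \<in> H" and V: "V \<subseteq> carrier G" and W: "W \<subseteq> carrier G"
  shows "rcosets_in G (x ` V) (x ` V \<inter> x ` W) = image x ` rcosets_in G V (V \<inter> W)"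
proof -
  have "rcosets_in G (x ` V) (x ` V \<inter> x ` W) = {x ` (V \<inter> W) #> x a | a. a \<in> V}"
    unfolding rcosets_in_def image_Int[OF x V W] by blast
  also have "\<dots> = {x ` ((V \<inter> W) #> a) | a. a \<in> V}"
    using image_rcos[OF x] V by (metis (no_types, opaque_lifting) inf.coboundedI1 subsetD)
  finally show ?thesis by (auto simp: rcosets_in_def)
qed

lemma idx_image:
  assumes x: "x \<in> H" and V: "V \<subseteq> carrier G" and W: "W \<subseteq> carrier G"
  shows "idx G (x ` V) (x ` V \<inter> x ` W) = idx G V (V \<inter> W)"
proof -
  have "rcosets_in G V (V \<inter> W) \<subseteq> Pow (carrier G)"
    using V by (auto simp: rcosets_in_def r_coset_def)
  then have "inj_on (image x) (rcosets_in G V (V \<inter> W))"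
    using inj_on_image_Pow[OF aut_inj_on[OF x]] inj_on_subset by blast
  then show ?thesis
    by (simp add: idx_eq_card_rcosets_in rcosets_in_image[OF assms] card_image)
qed

lemma cos_mdist_image:
  "x \<in> H \<Longrightarrow> V \<in> COS G T \<Longrightarrow> W \<in> COS G T \<Longrightarrow> cos_mdist G (x ` V) (x ` W) = cos_mdist G V W"
  by (simp add: cos_mdist_def idx_image COS_subset_carrier)

lemma cos_mdist_\<H>_mult:
  assumes x: "x \<in> H" and y: "y \<in> H" and U: "U \<in> COS G T"
  shows "cos_mdist G ((x \<otimes>\<^bsub>\<H>\<^esub> y) ` U) U \<le> cos_mdist G (y ` U) U * cos_mdist G (x ` U) U"
proof -
  have "cos_mdist G ((x \<otimes>\<^bsub>\<H>\<^esub> y) ` U) U = cos_mdist G (x ` y ` U) U"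
    using image_\<H>_mult[OF x y COS_subset_carrier[OF U]] by simp
  also have "\<dots> \<le> cos_mdist G (x ` y ` U) (x ` U) * cos_mdist G (x ` U) U"
    using cos_mdist_triangle COS_image x y U by blast
  also have "\<dots> = cos_mdist G (y ` U) U * cos_mdist G (x ` U) U"
    using cos_mdist_image x COS_image y U by simp
  finally show ?thesis .
qed

lemma cos_mdist_\<H>_inv:
  assumes x: "x \<in> H" and U: "U \<in> COS G T"
  shows "cos_mdist G ((inv\<^bsub>\<H>\<^esub> x) ` U) U = cos_mdist G (x ` U) U"
proof -
  have "cos_mdist G ((inv\<^bsub>\<H>\<^esub> x) ` U) U = cos_mdist G (x ` (inv\<^bsub>\<H>\<^esub> x) ` U) (x ` U)"
    using cos_mdist_image[OF x COS_image[OF \<H>_inv_closed[OF x] U] U] by simp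
  also have "\<dots> = cos_mdist G U (x ` U)"
    using image_image_\<H>_inv[OF x COS_subset_carrier[OF U]] by simp
  finally show ?thesis by (simp add: cos_mdist_commute)
qed

lemma bounded_auts_imp_bounded_cos_mdist:
  assumes B: "B \<subseteq> H" and U: "U \<in> COS G T" and bdd: "bounded_auts G T B"
  shows "\<exists>R. \<forall>\<beta>\<in>B. cos_mdist G (\<beta> ` U) U \<le> R"
proof (cases "B = {}")
  case False
  then obtain \<beta>\<^sub>0 where \<beta>\<^sub>0: "\<beta>\<^sub>0 \<in> B" by blast
  obtain V M where V: "V \<in> COS G T" and M: "\<forall>\<beta>\<in>B. \<forall>\<gamma>\<in>B. cos_dist G (\<beta> ` V) (\<gamma> ` V) \<le> M"
    using bdd unfolding bounded_auts_def by blast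
  have "cos_mdist G (\<beta> ` U) U \<le> cos_mdist G U V * nat \<lceil>exp M\<rceil> * cos_mdist G (\<beta>\<^sub>0 ` V) U"
    if \<beta>: "\<beta> \<in> B" for \<beta>
  proof -
    have H: "\<beta> \<in> H" "\<beta>\<^sub>0 \<in> H" using \<beta> \<beta>\<^sub>0 B by auto
    have COS: "\<beta> ` U \<in> COS G T" "\<beta> ` V \<in> COS G T" "\<beta>\<^sub>0 ` V \<in> COS G T"
      using COS_image H U V by auto
    have "cos_mdist G (\<beta> ` U) U \<le> cos_mdist G (\<beta> ` U) (\<beta> ` V) * cos_mdist G (\<beta> ` V) U"
      using cos_mdist_triangle COS U by blast
    also have "\<dots> \<le> cos_mdist G (\<beta> ` U) (\<beta> ` V) * (cos_mdist G (\<beta> ` V) (\<beta>\<^sub>0 ` V) * cos_mdist G (\<beta>\<^sub>0 ` V) U)"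
      using cos_mdist_triangle COS U by (intro mult_le_mono2) blast
    also have "\<dots> = cos_mdist G U V * cos_mdist G (\<beta> ` V) (\<beta>\<^sub>0 ` V) * cos_mdist G (\<beta>\<^sub>0 ` V) U"
      using cos_mdist_image H U V by simp
    also have "\<dots> \<le> cos_mdist G U V * nat \<lceil>exp M\<rceil> * cos_mdist G (\<beta>\<^sub>0 ` V) U"
      using cos_dist_le_imp_cos_mdist_le COS M \<beta> \<beta>\<^sub>0 by (intro mult_le_mono) auto
    finally show ?thesis .
  qed
  then show ?thesis by blast
qed simp

lemma bounded_cos_mdist_imp_bounded_auts:
  assumes B: "B \<subseteq> H" and U: "U \<in> COS G T" and R: "\<forall>\<beta>\<in>B. cos_mdist G (\<beta> ` U) U \<le> R"
  shows "bounded_auts G T B"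
proof -
  have "cos_dist G (\<beta> ` U) (\<gamma> ` U) \<le> ln (real (R * R))" if "\<beta> \<in> B" "\<gamma> \<in> B" for \<beta> \<gamma>
  proof -
    have COS: "\<beta> ` U \<in> COS G T" "\<gamma> ` U \<in> COS G T" using COS_image that B U by auto
    have "cos_mdist G (\<beta> ` U) (\<gamma> ` U) \<le> cos_mdist G (\<beta> ` U) U * cos_mdist G (\<gamma> ` U) U"
      using cos_mdist_triangle[OF COS(1) U COS(2)] by (simp add: cos_mdist_commute)
    also have "\<dots> \<le> R * R" using R that by (intro mult_le_mono) auto
    finally show ?thesis using cos_mdist_le_imp_cos_dist_le COS by blast
  qed
  then show ?thesis unfolding bounded_auts_def using U by blast
qed

abbreviation conj_aut :: "('a \<Rightarrow> 'a) \<Rightarrow> ('a \<Rightarrow> 'a) \<Rightarrow> 'a \<Rightarrow> 'a" where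
  "conj_aut \<psi> \<phi> \<equiv> \<psi> \<otimes>\<^bsub>\<H>\<^esub> \<phi> \<otimes>\<^bsub>\<H>\<^esub> inv\<^bsub>\<H>\<^esub> \<psi>"

lemma conj_aut_closed: "\<psi> \<in> H \<Longrightarrow> \<phi> \<in> H \<Longrightarrow> conj_aut \<psi> \<phi> \<in> H"
  by (simp add: \<H>_mult_closed \<H>_inv_closed)

lemma conj_aut_one: "\<psi> \<in> H \<Longrightarrow> conj_aut \<psi> \<one>\<^bsub>\<H>\<^esub> = \<one>\<^bsub>\<H>\<^esub>"
  by (simp add: carrier_\<H>)

lemma conj_aut_mult:
  assumes "\<psi> \<in> H" "\<phi> \<in> H" "\<theta> \<in> H"
  shows "conj_aut \<psi> (\<phi> \<otimes>\<^bsub>\<H>\<^esub> \<theta>) = conj_aut \<psi> \<phi> \<otimes>\<^bsub>\<H>\<^esub> conj_aut \<psi> \<theta>"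
proof -
  have carr: "\<psi> \<in> carrier \<H>" "\<phi> \<in> carrier \<H>" "\<theta> \<in> carrier \<H>"
    using assms by (simp_all add: carrier_\<H>)
  then have "inv\<^bsub>\<H>\<^esub> \<psi> \<otimes>\<^bsub>\<H>\<^esub> (\<psi> \<otimes>\<^bsub>\<H>\<^esub> (\<theta> \<otimes>\<^bsub>\<H>\<^esub> inv\<^bsub>\<H>\<^esub> \<psi>)) = \<theta> \<otimes>\<^bsub>\<H>\<^esub> inv\<^bsub>\<H>\<^esub> \<psi>"
    by (simp add: \<H>.m_assoc[symmetric])
  then show ?thesis using carr by (simp add: \<H>.m_assoc)
qed

lemma conj_aut_inv:
  assumes "\<psi> \<in> H" "\<phi> \<in> H"
  shows "conj_aut \<psi> (inv\<^bsub>\<H>\<^esub> \<phi>) = inv\<^bsub>\<H>\<^esub> (conj_aut \<psi> \<phi>)"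
proof -
  have "\<psi> \<in> carrier \<H>" "\<phi> \<in> carrier \<H>" using assms by (simp_all add: carrier_\<H>)
  then show ?thesis by (simp add: \<H>.m_assoc \<H>.inv_mult_group)
qed

lemma conj_aut_conj_aut:
  assumes "\<psi> \<in> H" "\<theta> \<in> H" "\<phi> \<in> H"
  shows "conj_aut \<psi> (conj_aut \<theta> \<phi>) = conj_aut (\<psi> \<otimes>\<^bsub>\<H>\<^esub> \<theta>) \<phi>"
proof -
  have "\<psi> \<in> carrier \<H>" "\<theta> \<in> carrier \<H>" "\<phi> \<in> carrier \<H>" using assms by (simp_all add: carrier_\<H>)
  then show ?thesis by (simp add: \<H>.m_assoc \<H>.inv_mult_group)
qed

lemma cos_mdist_conj_aut_le:
  assumes \<psi>: "\<psi> \<in> H" and \<phi>: "\<phi> \<in> H" and U: "U \<in> COS G T"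
  shows "cos_mdist G (conj_aut \<psi> \<phi> ` U) U \<le> cos_mdist G (\<psi> ` U) U ^ 2 * cos_mdist G (\<phi> ` U) U"
proof -
  have "cos_mdist G (conj_aut \<psi> \<phi> ` U) U
          \<le> cos_mdist G ((inv\<^bsub>\<H>\<^esub> \<psi>) ` U) U * cos_mdist G ((\<psi> \<otimes>\<^bsub>\<H>\<^esub> \<phi>) ` U) U"
    using cos_mdist_\<H>_mult[OF \<H>_mult_closed[OF \<psi> \<phi>] \<H>_inv_closed[OF \<psi>] U] .
  also have "\<dots> \<le> cos_mdist G (\<psi> ` U) U * (cos_mdist G (\<phi> ` U) U * cos_mdist G (\<psi> ` U) U)"
    using cos_mdist_\<H>_inv[OF \<psi> U] cos_mdist_\<H>_mult[OF \<psi> \<phi> U] by simp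
  finally show ?thesis by (simp add: power2_eq_square ac_simps)
qed

lemma FCd_iff:
  assumes U: "U \<in> COS G T"
  shows "\<phi> \<in> FCd G T H \<longleftrightarrow> \<phi> \<in> H \<and> (\<exists>R. \<forall>\<psi>\<in>H. cos_mdist G (conj_aut \<psi> \<phi> ` U) U \<le> R)"
proof (cases "\<phi> \<in> H")
  case True
  let ?B = "{conj_aut \<psi> \<phi> | \<psi>. \<psi> \<in> H}"
  have "?B \<subseteq> H" using conj_aut_closed True by blast
  then have "bounded_auts G T ?B \<longleftrightarrow> (\<exists>R. \<forall>\<beta>\<in>?B. cos_mdist G (\<beta> ` U) U \<le> R)"
    using bounded_auts_imp_bounded_cos_mdist bounded_cos_mdist_imp_bounded_auts U by blast
  also have "\<dots> \<longleftrightarrow> (\<exists>R. \<forall>\<psi>\<in>H. cos_mdist G (conj_aut \<psi> \<phi> ` U) U \<le> R)"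
    by blast
  finally show ?thesis using True by (simp add: FCd_def)
qed (simp add: FCd_def)

lemma FCd_normal:
  assumes U: "U \<in> COS G T"
  shows "FCd G T H \<lhd> \<H>"
proof -
  note FCd = FCd_iff[OF U]
  have one: "\<one>\<^bsub>\<H>\<^esub> \<in> FCd G T H"
    unfolding FCd using conj_aut_one \<H>.one_closed by (auto simp: carrier_\<H>)
  have inv: "inv\<^bsub>\<H>\<^esub> \<phi> \<in> FCd G T H" if \<phi>_FCd: "\<phi> \<in> FCd G T H" for \<phi>
  proof -
    obtain R where \<phi>: "\<phi> \<in> H" and R: "\<forall>\<psi>\<in>H. cos_mdist G (conj_aut \<psi> \<phi> ` U) U \<le> R"
      using FCd[THEN iffD1, OF \<phi>_FCd] by blast
    have "cos_mdist G (conj_aut \<psi> (inv\<^bsub>\<H>\<^esub> \<phi>) ` U) U \<le> R" if "\<psi> \<in> H" for \<psi>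
      using R that conj_aut_inv[OF that \<phi>] cos_mdist_\<H>_inv[OF conj_aut_closed[OF that \<phi>] U] by simp
    then show ?thesis unfolding FCd using \<H>_inv_closed \<phi> by blast
  qed
  have mult: "\<phi> \<otimes>\<^bsub>\<H>\<^esub> \<theta> \<in> FCd G T H" if FCd_mem: "\<phi> \<in> FCd G T H" "\<theta> \<in> FCd G T H" for \<phi> \<theta>
  proof -
    obtain R where \<phi>: "\<phi> \<in> H" and R: "\<forall>\<psi>\<in>H. cos_mdist G (conj_aut \<psi> \<phi> ` U) U \<le> R"
      using FCd[THEN iffD1, OF FCd_mem(1)] by blast
    obtain S where \<theta>: "\<theta> \<in> H" and S: "\<forall>\<psi>\<in>H. cos_mdist G (conj_aut \<psi> \<theta> ` U) U \<le> S"
      using FCd[THEN iffD1, OF FCd_mem(2)] by blast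
    have "cos_mdist G (conj_aut \<psi> (\<phi> \<otimes>\<^bsub>\<H>\<^esub> \<theta>) ` U) U \<le> S * R" if \<psi>: "\<psi> \<in> H" for \<psi>
    proof -
      have "cos_mdist G (conj_aut \<psi> (\<phi> \<otimes>\<^bsub>\<H>\<^esub> \<theta>) ` U) U
              \<le> cos_mdist G (conj_aut \<psi> \<theta> ` U) U * cos_mdist G (conj_aut \<psi> \<phi> ` U) U"
        using conj_aut_mult[OF \<psi> \<phi> \<theta>]
          cos_mdist_\<H>_mult[OF conj_aut_closed[OF \<psi> \<phi>] conj_aut_closed[OF \<psi> \<theta>] U] by simp
      also have "\<dots> \<le> S * R" using R S \<psi> by (intro mult_le_mono) auto
      finally show ?thesis .
    qed
    then show ?thesis unfolding FCd using \<H>_mult_closed \<phi> \<theta> by blast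
  qed
  have "FCd G T H \<subseteq> carrier \<H>" unfolding FCd_def carrier_\<H> by blast
  then have "subgroup (FCd G T H) \<H>"
    using \<H>.subgroupI[OF _ _ inv mult] one by blast
  moreover have "conj_aut \<psi> \<phi> \<in> FCd G T H" if FCd_mem: "\<psi> \<in> H" "\<phi> \<in> FCd G T H" for \<psi> \<phi>
  proof -
    obtain R where \<phi>: "\<phi> \<in> H" and R: "\<forall>\<theta>\<in>H. cos_mdist G (conj_aut \<theta> \<phi> ` U) U \<le> R"
      using FCd[THEN iffD1, OF FCd_mem(2)] by blast
    have "cos_mdist G (conj_aut \<theta> (conj_aut \<psi> \<phi>) ` U) U \<le> R" if "\<theta> \<in> H" for \<theta>
      using conj_aut_conj_aut[OF that \<open>\<psi> \<in> H\<close> \<phi>] R \<H>_mult_closed that \<open>\<psi> \<in> H\<close> by simp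
    then show ?thesis unfolding FCd using conj_aut_closed \<open>\<psi> \<in> H\<close> \<phi> by blast
  qed
  ultimately show ?thesis unfolding \<H>.normal_inv_iff carrier_\<H> by blast
qed

lemma idx_conj_aut_image:
  assumes \<psi>: "\<psi> \<in> H" and \<phi>: "\<phi> \<in> H" and V: "V \<in> COS G T"
  shows "idx G (conj_aut \<psi> \<phi> ` \<psi> ` V) (conj_aut \<psi> \<phi> ` \<psi> ` V \<inter> \<psi> ` V) = idx G (\<phi> ` V) (\<phi> ` V \<inter> V)"
proof -
  have V_carr: "V \<subseteq> carrier G" using COS_subset_carrier[OF V] .
  have "conj_aut \<psi> \<phi> ` \<psi> ` V = \<psi> ` \<phi> ` V"
    using image_\<H>_mult[OF \<H>_mult_closed[OF \<psi> \<phi>] \<H>_inv_closed[OF \<psi>] aut_image_subset[OF \<psi> V_carr]]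
      image_\<H>_mult[OF \<psi> \<phi> V_carr] image_\<H>_inv_image[OF \<psi> V_carr] by simp
  then show ?thesis
    using idx_image[OF \<psi> aut_image_subset[OF \<phi> V_carr] V_carr] by simp
qed

lemma scale_conj_aut:
  assumes \<psi>: "\<psi> \<in> H" and \<phi>: "\<phi> \<in> H"
  shows "scale G T (conj_aut \<psi> \<phi>) = scale G T \<phi>"
proof -
  have shift: "\<exists>W\<in>COS G T. n = idx G (conj_aut \<psi> \<phi> ` W) (conj_aut \<psi> \<phi> ` W \<inter> W)"
    if "\<psi> \<in> H" "\<phi> \<in> H" "V \<in> COS G T" "n = idx G (\<phi> ` V) (\<phi> ` V \<inter> V)" for n \<psi> \<phi> V
  proof
    show "\<psi> ` V \<in> COS G T" using COS_image that(1,3) .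
    show "n = idx G (conj_aut \<psi> \<phi> ` \<psi> ` V) (conj_aut \<psi> \<phi> ` \<psi> ` V \<inter> \<psi> ` V)"
      using idx_conj_aut_image that by simp
  qed
  have inv_conj: "conj_aut (inv\<^bsub>\<H>\<^esub> \<psi>) (conj_aut \<psi> \<phi>) = \<phi>"
    using conj_aut_conj_aut[OF \<H>_inv_closed[OF \<psi>] \<psi> \<phi>] \<psi> \<phi> by (simp add: carrier_\<H>)
  have "(\<exists>V\<in>COS G T. n = idx G (conj_aut \<psi> \<phi> ` V) (conj_aut \<psi> \<phi> ` V \<inter> V))
          \<longleftrightarrow> (\<exists>V\<in>COS G T. n = idx G (\<phi> ` V) (\<phi> ` V \<inter> V))" for n
  proof
    assume "\<exists>V\<in>COS G T. n = idx G (conj_aut \<psi> \<phi> ` V) (conj_aut \<psi> \<phi> ` V \<inter> V)"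
    then obtain V where "V \<in> COS G T" "n = idx G (conj_aut \<psi> \<phi> ` V) (conj_aut \<psi> \<phi> ` V \<inter> V)"
      by blast
    from shift[OF \<H>_inv_closed[OF \<psi>] conj_aut_closed[OF \<psi> \<phi>] this]
    show "\<exists>V\<in>COS G T. n = idx G (\<phi> ` V) (\<phi> ` V \<inter> V)" by (simp only: inv_conj)
  next
    assume "\<exists>V\<in>COS G T. n = idx G (\<phi> ` V) (\<phi> ` V \<inter> V)"
    then show "\<exists>V\<in>COS G T. n = idx G (conj_aut \<psi> \<phi> ` V) (conj_aut \<psi> \<phi> ` V \<inter> V)"
      using shift[OF \<psi> \<phi>] by blast
  qed
  then show ?thesis by (simp add: scale_def)
qed

text \<open>Both indices are scales, of \<open>\<kappa> \<phi> \<kappa>\<inverse>\<close> and of its inverse, and the scale is invariant under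
  conjugation.\<close>
lemma cos_mdist_conj_aut_flat:
  assumes K: "subgroup K \<H>" and U: "U \<in> COS G T"
    and tidy: "\<forall>\<phi>\<in>K. idx G (\<phi> ` U) (\<phi> ` U \<inter> U) = scale G T \<phi>"
    and \<phi>: "\<phi> \<in> K" and \<kappa>: "\<kappa> \<in> K"
  shows "cos_mdist G (conj_aut \<kappa> \<phi> ` U) U = scale G T \<phi> * scale G T (inv\<^bsub>\<H>\<^esub> \<phi>)"
proof -
  have K_H: "K \<subseteq> H" using subgroup.subset[OF K] by (simp add: carrier_\<H>)
  have closed: "conj_aut \<kappa> \<phi> \<in> K" "conj_aut \<kappa> (inv\<^bsub>\<H>\<^esub> \<phi>) \<in> K"
    using K \<phi> \<kappa> by (simp_all add: subgroup.m_closed subgroup.m_inv_closed)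
  have H: "\<kappa> \<in> H" "\<phi> \<in> H" "conj_aut \<kappa> \<phi> \<in> H" using K_H \<phi> \<kappa> closed by auto
  have U_carr: "U \<subseteq> carrier G" using COS_subset_carrier[OF U] .
  let ?\<theta> = "conj_aut \<kappa> \<phi>"
  have "idx G U (U \<inter> ?\<theta> ` U)
          = idx G ((inv\<^bsub>\<H>\<^esub> ?\<theta>) ` U) ((inv\<^bsub>\<H>\<^esub> ?\<theta>) ` U \<inter> (inv\<^bsub>\<H>\<^esub> ?\<theta>) ` ?\<theta> ` U)"
    using idx_image[OF \<H>_inv_closed[OF H(3)] U_carr aut_image_subset[OF H(3) U_carr]] by simp
  also have "\<dots> = idx G (conj_aut \<kappa> (inv\<^bsub>\<H>\<^esub> \<phi>) ` U) (conj_aut \<kappa> (inv\<^bsub>\<H>\<^esub> \<phi>) ` U \<inter> U)"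
    using image_\<H>_inv_image[OF H(3) U_carr] conj_aut_inv[OF H(1,2)] by simp
  also have "\<dots> = scale G T (inv\<^bsub>\<H>\<^esub> \<phi>)"
    using tidy closed(2) scale_conj_aut[OF H(1) \<H>_inv_closed[OF H(2)]] by simp
  finally show ?thesis
    using tidy closed(1) scale_conj_aut[OF H(1,2)] by (simp add: cos_mdist_def Int_commute)
qed

lemma flat_finite_index_subset_FCd:
  assumes K: "subgroup K \<H>" and "flat G T K" and "finite_index \<H> K"
  shows "K \<subseteq> FCd G T H"
proof
  obtain U where U: "U \<in> COS G T"
    and tidy: "\<forall>\<phi>\<in>K. idx G (\<phi> ` U) (\<phi> ` U \<inter> U) = scale G T \<phi>"
    using \<open>flat G T K\<close> unfolding flat_def by blast
  have fin: "finite (rcosets\<^bsub>\<H>\<^esub> K)" using \<open>finite_index \<H> K\<close> by (simp add: finite_index_def)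
  fix \<phi> assume \<phi>: "\<phi> \<in> K"
  have K_H: "K \<subseteq> H" using subgroup.subset[OF K] by (simp add: carrier_\<H>)
  have "\<forall>C \<in> rcosets\<^bsub>\<H>\<^esub> K. \<exists>h. h \<in> H \<and> C = K #>\<^bsub>\<H>\<^esub> h"
    by (auto simp: RCOSETS_def carrier_\<H>)
  then obtain rep where rep: "\<And>C. C \<in> rcosets\<^bsub>\<H>\<^esub> K \<Longrightarrow> rep C \<in> H \<and> C = K #>\<^bsub>\<H>\<^esub> rep C"
    by metis
  define c where "c = scale G T \<phi> * scale G T (inv\<^bsub>\<H>\<^esub> \<phi>)"
  define R where "R = (\<Sum>C\<in>rcosets\<^bsub>\<H>\<^esub> K. cos_mdist G (rep C ` U) U ^ 2 * c)"
  have "cos_mdist G (conj_aut \<psi> \<phi> ` U) U \<le> R" if \<psi>: "\<psi> \<in> H" for \<psi>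
  proof -
    let ?C = "K #>\<^bsub>\<H>\<^esub> inv\<^bsub>\<H>\<^esub> \<psi>"
    have C: "?C \<in> rcosets\<^bsub>\<H>\<^esub> K"
      using \<H>_inv_closed[OF \<psi>] by (auto simp: RCOSETS_def carrier_\<H>)
    define h where "h = rep ?C"
    have h: "h \<in> H" and C_eq: "?C = K #>\<^bsub>\<H>\<^esub> h" using rep[OF C] by (simp_all add: h_def)
    have "inv\<^bsub>\<H>\<^esub> \<psi> \<in> K #>\<^bsub>\<H>\<^esub> h"
      using \<H>.rcos_self[OF _ K] \<H>_inv_closed[OF \<psi>] C_eq by (fastforce simp: carrier_\<H>)
    then obtain \<kappa> where \<kappa>: "\<kappa> \<in> K" and \<psi>_inv: "inv\<^bsub>\<H>\<^esub> \<psi> = \<kappa> \<otimes>\<^bsub>\<H>\<^esub> h"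
      by (auto simp: r_coset_def)
    have H: "\<kappa> \<in> H" "inv\<^bsub>\<H>\<^esub> \<kappa> \<in> H" "inv\<^bsub>\<H>\<^esub> h \<in> H" "\<phi> \<in> H"
      using \<kappa> K_H \<phi> h \<H>_inv_closed by auto
    have "\<psi> = inv\<^bsub>\<H>\<^esub> (inv\<^bsub>\<H>\<^esub> \<psi>)" using \<psi> by (simp add: carrier_\<H>)
    also have "\<dots> = inv\<^bsub>\<H>\<^esub> h \<otimes>\<^bsub>\<H>\<^esub> inv\<^bsub>\<H>\<^esub> \<kappa>"
      using \<psi>_inv H(1) h by (simp add: \<H>.inv_mult_group carrier_\<H>)
    finally have conj_eq: "conj_aut \<psi> \<phi> = conj_aut (inv\<^bsub>\<H>\<^esub> h) (conj_aut (inv\<^bsub>\<H>\<^esub> \<kappa>) \<phi>)"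
      using conj_aut_conj_aut[OF H(3,2,4)] by simp
    have "inv\<^bsub>\<H>\<^esub> \<kappa> \<in> K" using K \<kappa> by (simp add: subgroup.m_inv_closed)
    then have "cos_mdist G (conj_aut (inv\<^bsub>\<H>\<^esub> \<kappa>) \<phi> ` U) U = c"
      using cos_mdist_conj_aut_flat[OF K U tidy \<phi>] by (simp add: c_def)
    then have "cos_mdist G (conj_aut \<psi> \<phi> ` U) U \<le> cos_mdist G (h ` U) U ^ 2 * c"
      using conj_eq cos_mdist_conj_aut_le[OF H(3) conj_aut_closed[OF H(2,4)] U]
        cos_mdist_\<H>_inv[OF h U] by simp
    also have "\<dots> \<le> R"
      unfolding R_def h_def using C fin by (intro member_le_sum) auto
    finally show ?thesis .
  qed
  then show "\<phi> \<in> FCd G T H" unfolding FCd_iff[OF U] using \<phi> K_H by blast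
qed

end

theorem lemma3:
  fixes G :: "('a, 'b) monoid_scheme" and T :: "'a topology" and H :: "('a \<Rightarrow> 'a) set"
  assumes "tdlc_group G T"
    and "H \<subseteq> top_aut G T"
    and "subgroup H (BijGroup (carrier G))"
    and "virtually_flat G T H"
  shows "FCd G T H \<lhd> aut_grp G H
    \<and> (\<forall>K. subgroup K (aut_grp G H) \<and> flat G T K \<and> finite_index (aut_grp G H) K
           \<longrightarrow> K \<subseteq> FCd G T H)
    \<and> finite_index (aut_grp G H) (FCd G T H)"
proof -
  have "group G" "topspace T = carrier G"
    "continuous_map (prod_topology T T) T (\<lambda>(x, y). x \<otimes>\<^bsub>G\<^esub> y)"
    using assms(1) by (simp_all add: tdlc_group_def)
  then interpret aut_subgroup G T H
    using assms(2,3) by (simp add: aut_subgroup_def aut_subgroup_axioms_def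
        topological_group_def topological_group_axioms_def)
  obtain K where K: "subgroup K \<H>" "flat G T K" "finite_index \<H> K"
    using assms(4) unfolding virtually_flat_def by blast
  then obtain U where "U \<in> COS G T" unfolding flat_def by blast
  then have normal: "FCd G T H \<lhd> \<H>" by (rule FCd_normal)
  have "K \<subseteq> FCd G T H" using flat_finite_index_subset_FCd K .
  then have "finite_index \<H> (FCd G T H)"
    using \<H>.finite_rcosets_mono[OF K(1) normal_imp_subgroup[OF normal]] K(3)
    unfolding finite_index_def by blast
  then show ?thesis using normal flat_finite_index_subset_FCd by blast
qed

end
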